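(* Assume Assumption A. Then the family of conductance sequences $(c_N(\eta,\xi))_{N\ge1}$, $(\eta,\xi)\in\mathbb B$, where $c_N(\eta,\xi)=\mu_N(\eta)R_N(\eta,\xi)$, is ordered.
   Context: Setting: $E$ is a fixed finite set; for each $N\ge1$, $(\eta^N_t)$ is a continuous-time irreducible Markov chain on $E$ with jump rates $R_N(\eta,\xi)$ and unique invariant probability measure $\mu_N$. Ordered families: a finite family of sequences of positive reals $(a^r_N)_{N\ge1}$, $r\in\mathfrak R$, is ordered if for all $r\neq s$ the sequence $\arctan(a^r_N/a^s_N)$ converges as $N\to\infty$. Assumption A: (i) for each $\eta\neq\xi$, either $R_N(\eta,\xi)=0$ for all $N$ or $R_N(\eta,\xi)>0$ for all $N$; let $\mathbb B=\{(\eta,\xi):\eta\ne\xi,R_N(\eta,\xi)>0\}$. (ii) For every $m\ge1$ the family $\prod_{(\eta,\xi)\in\mathbb B}R_N(\eta,\xi)^{k(\eta,\xi)}$, indexed by $k:\mathbb B\to\mathbb Z_+$ with $\sum k=m$, is ordered. *)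

theory Defs
  imports "HOL-Analysis.Analysis"
begin

definition ordered_family :: "'r set \<Rightarrow> ('r \<Rightarrow> nat \<Rightarrow> real) \<Rightarrow> bool" where
  "ordered_family I a \<longleftrightarrow> finite I \<and> (\<forall>r\<in>I. \<forall>N\<ge>1. a r N > 0) \<and>
     (\<forall>r\<in>I. \<forall>s\<in>I. r \<noteq> s \<longrightarrow> convergent (\<lambda>N. arctan (a r N / a s N)))"

text \<open>Jump rates of a continuous-time Markov chain on the finite type 'a
  (off-diagonal entries nonnegative; the diagonal is irrelevant).\<close>
definition jump_rates :: "('a \<Rightarrow> 'a \<Rightarrow> real) \<Rightarrow> bool" where
  "jump_rates Q \<longleftrightarrow> (\<forall>x y. x \<noteq> y \<longrightarrow> Q x y \<ge> 0)"

definition irreducible_rates :: "('a \<Rightarrow> 'a \<Rightarrow> real) \<Rightarrow> bool" where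
  "irreducible_rates Q \<longleftrightarrow> (\<forall>x y. (x, y) \<in> {(u, v). u \<noteq> v \<and> Q u v > 0}\<^sup>*)"

definition invariant_prob :: "('a::finite \<Rightarrow> 'a \<Rightarrow> real) \<Rightarrow> ('a \<Rightarrow> real) \<Rightarrow> bool" where
  "invariant_prob Q \<mu> \<longleftrightarrow> (\<forall>x. \<mu> x \<ge> 0) \<and> (\<Sum>x\<in>UNIV. \<mu> x) = 1 \<and>
     (\<forall>y. (\<Sum>x\<in>UNIV - {y}. \<mu> x * Q x y) = \<mu> y * (\<Sum>z\<in>UNIV - {y}. Q y z))"

definition jump_set :: "(nat \<Rightarrow> 'a \<Rightarrow> 'a \<Rightarrow> real) \<Rightarrow> ('a \<times> 'a) set" where
  "jump_set R = {(x, y). x \<noteq> y \<and> (\<forall>N\<ge>1. R N x y > 0)}"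

definition assumption_A :: "(nat \<Rightarrow> 'a::finite \<Rightarrow> 'a \<Rightarrow> real) \<Rightarrow> bool" where
  "assumption_A R \<longleftrightarrow>
     (\<forall>x y. x \<noteq> y \<longrightarrow> (\<forall>N\<ge>1. R N x y = 0) \<or> (\<forall>N\<ge>1. R N x y > 0)) \<and>
     (\<forall>m\<ge>1. ordered_family
        {k :: 'a \<times> 'a \<Rightarrow> nat. (\<forall>p. p \<notin> jump_set R \<longrightarrow> k p = 0) \<and> sum k (jump_set R) = m}
        (\<lambda>k N. \<Prod>p\<in>jump_set R. R N (fst p) (snd p) ^ k p))"

end

theory Submission
  imports Defs
begin

text \<open>
  By the Markov chain tree theorem, \<open>\<mu>\<^sub>N(x)\<close> is proportional, with a factor independent
  of \<open>x\<close>, to the sum over the spanning trees directed towards \<open>x\<close> of the products of the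
  rates along their edges. Hence every conductance \<open>\<mu>\<^sub>N(x) R\<^sub>N(x,\<xi>)\<close> is, up to this
  common factor, a nonempty sum of monomials of degree \<open>|E|\<close> in the rates of the admissible
  jumps, and Assumption A says that these monomials form an ordered family. Ratios of such sums
  converge after \<open>arctan\<close>: dividing numerator and denominator by a dominant monomial among
  the finitely many involved, both converge, and at least one of the limits is positive.
\<close>

section \<open>Ordered families\<close>

lemma arctan_ratio_convergent:
  fixes x y u :: "nat \<Rightarrow> real"
  assumes pos: "\<forall>\<^sub>F N in sequentially. x N > 0 \<and> y N > 0 \<and> u N > 0"
    and x: "(\<lambda>N. x N / u N) \<longlonglongrightarrow> \<alpha>" and y: "(\<lambda>N. y N / u N) \<longlonglongrightarrow> \<beta>"
    and "\<alpha> + \<beta> > 0"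
  shows "convergent (\<lambda>N. arctan (x N / y N))"
proof (cases "\<beta> = 0")
  case False
  have "(\<lambda>N. arctan ((x N / u N) / (y N / u N))) \<longlonglongrightarrow> arctan (\<alpha> / \<beta>)"
    by (intro tendsto_intros x y False)
  moreover have "\<forall>\<^sub>F N in sequentially. arctan ((x N / u N) / (y N / u N)) = arctan (x N / y N)"
    using pos by eventually_elim simp
  ultimately show ?thesis
    unfolding convergent_def by (blast intro: Lim_transform_eventually)
next
  case True
  with \<open>\<alpha> + \<beta> > 0\<close> have "\<alpha> \<noteq> 0" by simp
  have "(\<lambda>N. pi/2 - arctan ((y N / u N) / (x N / u N))) \<longlonglongrightarrow> pi/2 - arctan (\<beta> / \<alpha>)"
    by (intro tendsto_intros x y \<open>\<alpha> \<noteq> 0\<close>)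
  moreover have "\<forall>\<^sub>F N in sequentially.
      pi/2 - arctan ((y N / u N) / (x N / u N)) = arctan (x N / y N)"
    using pos
  proof eventually_elim
    case (elim N)
    then show ?case
      using arctan_inverse[of "y N / x N"] by (simp add: sgn_real_def)
  qed
  ultimately show ?thesis
    unfolding convergent_def by (blast intro: Lim_transform_eventually)
qed

lemma convergent_ratio_if_convergent_arctan:
  fixes x y :: "nat \<Rightarrow> real"
  assumes pos: "\<forall>\<^sub>F N in sequentially. x N > 0 \<and> y N > 0"
    and conv: "convergent (\<lambda>N. arctan (x N / y N))"
  shows "convergent (\<lambda>N. x N / y N) \<or> convergent (\<lambda>N. y N / x N)"
proof -
  from conv obtain L where L: "(\<lambda>N. arctan (x N / y N)) \<longlonglongrightarrow> L"
    unfolding convergent_def by blast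
  have "L \<le> pi/2"
    by (rule tendsto_upperbound[OF L])
      (simp_all add: always_eventually less_imp_le[OF arctan_ubound] del: divide_const_simps)
  have "L \<ge> 0"
  proof (rule tendsto_lowerbound[OF L])
    show "\<forall>\<^sub>F N in sequentially. 0 \<le> arctan (x N / y N)"
      using pos by eventually_elim simp
  qed simp
  show ?thesis
  proof (cases "L < pi/2")
    case True
    with \<open>L \<ge> 0\<close> have "cos L \<noteq> 0"
      using cos_gt_zero_pi[of L] by (smt (verit) pi_gt_zero)
    then have "(\<lambda>N. tan (arctan (x N / y N))) \<longlonglongrightarrow> tan L"
      by (intro isCont_tendsto_compose[OF isCont_tan L])
    then show ?thesis
      unfolding tan_arctan convergent_def by blast
  next
    case False
    with \<open>L \<le> pi/2\<close> have "L = pi/2" by simp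
    then have "(\<lambda>N. pi/2 - arctan (x N / y N)) \<longlonglongrightarrow> pi/2 - pi/2"
      using L by (intro tendsto_intros) (simp only: \<open>L = pi/2\<close>)
    then have "(\<lambda>N. pi/2 - arctan (x N / y N)) \<longlonglongrightarrow> 0"
      by simp
    moreover have "\<forall>\<^sub>F N in sequentially. pi/2 - arctan (x N / y N) = arctan (y N / x N)"
      using pos
    proof eventually_elim
      case (elim N)
      then show ?case
        using arctan_inverse[of "x N / y N"] by (simp add: sgn_real_def)
    qed
    ultimately have "(\<lambda>N. arctan (y N / x N)) \<longlonglongrightarrow> 0"
      by (rule Lim_transform_eventually)
    then have "(\<lambda>N. tan (arctan (y N / x N))) \<longlonglongrightarrow> tan 0"
      by (intro isCont_tendsto_compose[OF isCont_tan]) auto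
    then show ?thesis
      unfolding tan_arctan convergent_def by blast
  qed
qed

lemma convergent_ratio_trans:
  fixes x y z :: "nat \<Rightarrow> real"
  assumes "\<forall>\<^sub>F N in sequentially. y N \<noteq> 0"
    and "convergent (\<lambda>N. x N / y N)" and "convergent (\<lambda>N. y N / z N)"
  shows "convergent (\<lambda>N. x N / z N)"
proof -
  have "convergent (\<lambda>N. x N / y N * (y N / z N))"
    using assms(2,3) by (rule convergent_mult)
  moreover have "\<forall>\<^sub>F N in sequentially. x N / y N * (y N / z N) = x N / z N"
    using assms(1) by eventually_elim simp
  ultimately show ?thesis
    unfolding convergent_def by (blast intro: Lim_transform_eventually)
qed

lemma ordered_family_pos:
  "ordered_family I a \<Longrightarrow> r \<in> I \<Longrightarrow> \<forall>\<^sub>F N in sequentially. a r N > 0"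
  unfolding ordered_family_def by (intro eventually_sequentiallyI[of 1]) blast

lemma ordered_family_ratio_convergent:
  assumes ord: "ordered_family I a" and "i \<in> I" "j \<in> I"
  shows "convergent (\<lambda>N. a i N / a j N) \<or> convergent (\<lambda>N. a j N / a i N)"
proof (cases "i = j")
  case True
  have "\<forall>\<^sub>F N in sequentially. 1 = a i N / a i N"
    using ordered_family_pos[OF ord \<open>i \<in> I\<close>] by eventually_elim simp
  then have "(\<lambda>N. a i N / a i N) \<longlonglongrightarrow> 1"
    by (rule Lim_transform_eventually[OF tendsto_const])
  with True show ?thesis
    unfolding convergent_def by blast
next
  case False
  show ?thesis
  proof (rule convergent_ratio_if_convergent_arctan)
    show "\<forall>\<^sub>F N in sequentially. a i N > 0 \<and> a j N > 0"
      using ordered_family_pos[OF ord] assms(2,3) by (intro eventually_conj)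
    show "convergent (\<lambda>N. arctan (a i N / a j N))"
      using ord assms(2,3) False unfolding ordered_family_def by blast
  qed
qed

lemma ordered_family_dominant:
  assumes ord: "ordered_family I a" and "finite J" "J \<noteq> {}" "J \<subseteq> I"
  shows "\<exists>u\<in>J. \<forall>i\<in>J. convergent (\<lambda>N. a i N / a u N)"
  using assms(2-4)
proof (induction J rule: finite_ne_induct)
  case (singleton x)
  then show ?case
    using ordered_family_ratio_convergent[OF ord, of x x] by auto
next
  case (insert x F)
  then obtain u where u: "u \<in> F" "\<forall>i\<in>F. convergent (\<lambda>N. a i N / a u N)"
    by auto
  have "x \<in> I" "u \<in> I"
    using insert u by auto
  have "\<forall>\<^sub>F N in sequentially. a u N \<noteq> 0"
    using ordered_family_pos[OF ord \<open>u \<in> I\<close>] by eventually_elim simp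
  note via_u = convergent_ratio_trans[OF this]
  consider "convergent (\<lambda>N. a u N / a x N)" | "convergent (\<lambda>N. a x N / a u N)"
    using ordered_family_ratio_convergent[OF ord \<open>u \<in> I\<close> \<open>x \<in> I\<close>] by blast
  then show ?case
  proof cases
    case 1
    have "convergent (\<lambda>N. a x N / a x N)"
      using ordered_family_ratio_convergent[OF ord \<open>x \<in> I\<close> \<open>x \<in> I\<close>] by simp
    with u 1 show ?thesis
      by (auto intro: via_u)
  next
    case 2
    then show ?thesis using u by auto
  qed
qed

lemma ordered_family_sum_ratio_convergent:
  assumes ord: "ordered_family I a" and "finite S" "finite T" "S \<noteq> {}" "T \<noteq> {}"
    and "\<phi> ` S \<subseteq> I" "\<psi> ` T \<subseteq> I"
  shows "convergent (\<lambda>N. arctan ((\<Sum>s\<in>S. a (\<phi> s) N) / (\<Sum>t\<in>T. a (\<psi> t) N)))"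
proof -
  let ?J = "\<phi> ` S \<union> \<psi> ` T"
  let ?X = "\<lambda>N. \<Sum>s\<in>S. a (\<phi> s) N" and ?Y = "\<lambda>N. \<Sum>t\<in>T. a (\<psi> t) N"
  obtain u where "u \<in> ?J" and dom: "\<forall>i\<in>?J. convergent (\<lambda>N. a i N / a u N)"
    using ordered_family_dominant[OF ord, of ?J] assms by auto
  define lim_u where "lim_u i = lim (\<lambda>N. a i N / a u N)" for i
  have lim_u: "(\<lambda>N. a i N / a u N) \<longlonglongrightarrow> lim_u i" if "i \<in> ?J" for i
    using dom that by (simp add: lim_u_def convergent_LIMSEQ_iff)
  have X: "(\<lambda>N. ?X N / a u N) \<longlonglongrightarrow> (\<Sum>s\<in>S. lim_u (\<phi> s))"
    unfolding sum_divide_distrib by (intro tendsto_sum lim_u) blast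
  have Y: "(\<lambda>N. ?Y N / a u N) \<longlonglongrightarrow> (\<Sum>t\<in>T. lim_u (\<psi> t))"
    unfolding sum_divide_distrib by (intro tendsto_sum lim_u) blast
  have pos: "a i N > 0" if "i \<in> I" "N \<ge> 1" for i N
    using ord that unfolding ordered_family_def by blast
  have "u \<in> I"
    using \<open>u \<in> ?J\<close> assms by blast
  have XY_pos: "?X N > 0" "?Y N > 0" if "N \<ge> 1" for N
    using assms pos[OF _ that] by (auto intro!: sum_pos)
  have u_le: "a u N \<le> ?X N + ?Y N" if "N \<ge> 1" for N
  proof -
    have nonneg: "0 \<le> a i N" if "i \<in> I" for i
      using pos[OF that \<open>N \<ge> 1\<close>] by simp
    from \<open>u \<in> ?J\<close> have "a u N \<le> ?X N \<or> a u N \<le> ?Y N"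
    proof
      assume "u \<in> \<phi> ` S"
      then obtain s where "s \<in> S" "u = \<phi> s" by blast
      then have "a u N \<le> ?X N"
        using assms nonneg by (auto intro!: member_le_sum)
      then show ?thesis ..
    next
      assume "u \<in> \<psi> ` T"
      then obtain t where "t \<in> T" "u = \<psi> t" by blast
      then have "a u N \<le> ?Y N"
        using assms nonneg by (auto intro!: member_le_sum)
      then show ?thesis ..
    qed
    then show ?thesis
      using XY_pos[OF that] by linarith
  qed
  show ?thesis
  proof (rule arctan_ratio_convergent[OF _ X Y])
    show "\<forall>\<^sub>F N in sequentially. ?X N > 0 \<and> ?Y N > 0 \<and> a u N > 0"
      using XY_pos pos[OF \<open>u \<in> I\<close>] by (intro eventually_sequentiallyI[of 1]) blast
    have "(\<lambda>N. (?X N + ?Y N) / a u N) \<longlonglongrightarrow> (\<Sum>s\<in>S. lim_u (\<phi> s)) + (\<Sum>t\<in>T. lim_u (\<psi> t))"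
      unfolding add_divide_distrib by (rule tendsto_add[OF X Y])
    moreover have "\<forall>\<^sub>F N in sequentially. 1 \<le> (?X N + ?Y N) / a u N"
      using u_le pos[OF \<open>u \<in> I\<close>] by (intro eventually_sequentiallyI[of 1]) simp
    ultimately have "1 \<le> (\<Sum>s\<in>S. lim_u (\<phi> s)) + (\<Sum>t\<in>T. lim_u (\<psi> t))"
      by (rule tendsto_lowerbound) simp
    then show "(\<Sum>s\<in>S. lim_u (\<phi> s)) + (\<Sum>t\<in>T. lim_u (\<psi> t)) > 0"
      by simp
  qed
qed

lemma ordered_family_scaled_sums:
  assumes ord: "ordered_family I a" and "finite J"
    and S: "\<And>j. j \<in> J \<Longrightarrow> finite (S j) \<and> S j \<noteq> {} \<and> \<phi> j ` S j \<subseteq> I"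
    and c: "\<And>N. N \<ge> 1 \<Longrightarrow> \<exists>t>0. \<forall>j\<in>J. c j N = t * (\<Sum>s\<in>S j. a (\<phi> j s) N)"
  shows "ordered_family J c"
  unfolding ordered_family_def
proof (intro conjI ballI allI impI)
  show "finite J" by fact
  fix i j N assume "i \<in> J" "j \<in> J"
  show "c i N > 0" if N: "N \<ge> 1"
  proof -
    obtain t where "t > 0" "c i N = t * (\<Sum>s\<in>S i. a (\<phi> i s) N)"
      using c[OF N] \<open>i \<in> J\<close> by blast
    moreover have "(\<Sum>s\<in>S i. a (\<phi> i s) N) > 0"
      using S[OF \<open>i \<in> J\<close>] ord N unfolding ordered_family_def by (auto intro!: sum_pos)
    ultimately show ?thesis
      by simp
  qed
  assume "i \<noteq> j"
  have sums: "convergent (\<lambda>N. arctan ((\<Sum>s\<in>S i. a (\<phi> i s) N) / (\<Sum>s\<in>S j. a (\<phi> j s) N)))"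
    using S[OF \<open>i \<in> J\<close>] S[OF \<open>j \<in> J\<close>] by (intro ordered_family_sum_ratio_convergent[OF ord]) auto
  have "\<forall>\<^sub>F N in sequentially.
      arctan ((\<Sum>s\<in>S i. a (\<phi> i s) N) / (\<Sum>s\<in>S j. a (\<phi> j s) N)) = arctan (c i N / c j N)"
  proof (rule eventually_sequentiallyI)
    fix N :: nat assume "N \<ge> 1"
    then obtain t where "t > 0" "c i N = t * (\<Sum>s\<in>S i. a (\<phi> i s) N)"
      "c j N = t * (\<Sum>s\<in>S j. a (\<phi> j s) N)"
      using c \<open>i \<in> J\<close> \<open>j \<in> J\<close> by blast
    then show "arctan ((\<Sum>s\<in>S i. a (\<phi> i s) N) / (\<Sum>s\<in>S j. a (\<phi> j s) N)) = arctan (c i N / c j N)"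
      by simp
  qed
  then show "convergent (\<lambda>N. arctan (c i N / c j N))"
    using sums by (simp only: convergent_cong)
qed

section \<open>Spanning trees as parent maps\<close>

inductive_set reaches :: "('a \<Rightarrow> 'a) \<Rightarrow> 'a \<Rightarrow> 'a set" for f :: "'a \<Rightarrow> 'a" and r :: 'a where
  root: "r \<in> reaches f r"
| step: "f v \<in> reaches f r \<Longrightarrow> v \<in> reaches f r"

text \<open>A spanning tree directed towards \<open>r\<close> is encoded by its parent map; the value at the
  root is fixed to \<open>r\<close> itself.\<close>

definition rooted_tree :: "'a \<Rightarrow> ('a \<Rightarrow> 'a) \<Rightarrow> bool" where
  "rooted_tree r f \<longleftrightarrow> f r = r \<and> (\<forall>v. v \<in> reaches f r)"

text \<open>Loop-free maps all of whose orbits reach \<open>y\<close>, i.e. whose unique cycle passes through \<open>y\<close>.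
  Cutting the cycle after \<open>y\<close> leaves a tree rooted at \<open>y\<close>, cutting it before \<open>y\<close> a tree
  rooted at the predecessor of \<open>y\<close>; counting these graphs both ways yields the balance
  equations for tree sums.\<close>

definition unicycles :: "'a \<Rightarrow> ('a \<Rightarrow> 'a) set" where
  "unicycles y = {g. (\<forall>v. g v \<noteq> v) \<and> (\<forall>v. v \<in> reaches g y)}"

lemma reaches_fixpoint: "v \<in> reaches f r \<Longrightarrow> f v = v \<Longrightarrow> v = r"
  by (induction rule: reaches.induct) simp_all

lemma reaches_trans: "u \<in> reaches f v \<Longrightarrow> v \<in> reaches f w \<Longrightarrow> u \<in> reaches f w"
  by (induction rule: reaches.induct) (auto intro: reaches.step)

lemma reaches_fun_upd:
  "u \<in> reaches f r \<Longrightarrow> u \<in> reaches (f(a := b)) r \<or> u \<in> reaches (f(a := b)) a"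
proof (induction rule: reaches.induct)
  case root
  then show ?case by (auto intro: reaches.root)
next
  case (step v)
  then show ?case
    by (cases "v = a") (auto intro: reaches.root reaches.step)
qed

lemma reaches_successor: "v \<in> reaches f r \<Longrightarrow> f r = r \<Longrightarrow> f v \<in> reaches f r"
  by (induction rule: reaches.induct) (auto intro: reaches.root)

lemma reaches_unique_fixpoint:
  "u \<in> reaches f r \<Longrightarrow> f r = r \<Longrightarrow> u \<in> reaches f s \<Longrightarrow> f s = s \<Longrightarrow> r = s"
proof (induction rule: reaches.induct)
  case root
  then show ?case using reaches_fixpoint by metis
next
  case (step v)
  then show ?case using reaches_successor by metis
qed

lemma rooted_tree_no_fixpoint: "rooted_tree r f \<Longrightarrow> v \<noteq> r \<Longrightarrow> f v \<noteq> v"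
  unfolding rooted_tree_def using reaches_fixpoint by metis

lemma rooted_tree_acyclic:
  assumes tree: "rooted_tree r f" and "f a = b" "b \<in> reaches f a"
  shows "a = r"
proof -
  have closed: "f u \<in> reaches f a" if "u \<in> reaches f a" for u
    using that by (induction rule: reaches.induct) (use assms in auto)
  have "v \<in> reaches f a \<Longrightarrow> r \<in> reaches f a" if "v \<in> reaches f r" for v
    using that by (induction rule: reaches.induct) (use closed in auto)
  then have "r \<in> reaches f a"
    using tree by (auto simp: rooted_tree_def intro: reaches.root)
  then show ?thesis
    using tree reaches_fixpoint by (metis rooted_tree_def)
qed

lemma reaches_via_child:
  "v \<in> reaches h y \<Longrightarrow> v \<noteq> y \<Longrightarrow> \<exists>x. x \<noteq> y \<and> h x = y \<and> v \<in> reaches (h(x := x)) x"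
proof (induction rule: reaches.induct)
  case root
  then show ?case by simp
next
  case (step v)
  show ?case
  proof (cases "h v = y")
    case True
    with step.prems show ?thesis by (auto intro: reaches.root)
  next
    case False
    with step.IH obtain x where x: "x \<noteq> y" "h x = y" "h v \<in> reaches (h(x := x)) x"
      by blast
    then have "v \<in> reaches (h(x := x)) x"
      by (cases "v = x") (auto intro: reaches.root reaches.step)
    with x show ?thesis by blast
  qed
qed

lemma reaches_upd_root: "v \<in> reaches f r \<Longrightarrow> v \<in> reaches (f(r := z)) r"
proof (induction rule: reaches.induct)
  case root
  show ?case by (rule reaches.root)
next
  case (step v)
  show ?case
  proof (cases "v = r")
    case True
    then show ?thesis by (simp add: reaches.root)
  next
    case False
    then have "(f(r := z)) v = f v" by simp
    with step.IH have "(f(r := z)) v \<in> reaches (f(r := z)) r" by (simp only:)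
    then show ?thesis by (rule reaches.step)
  qed
qed

lemma rooted_tree_upd_root_unicycle:
  assumes tree: "rooted_tree y f" and "z \<noteq> y"
  shows "f(y := z) \<in> unicycles y"
proof -
  have "v \<in> reaches (f(y := z)) y" for v
    using tree by (simp add: rooted_tree_def reaches_upd_root)
  moreover have "(f(y := z)) v \<noteq> v" for v
    using rooted_tree_no_fixpoint[OF tree] \<open>z \<noteq> y\<close> by (cases "v = y") simp_all
  ultimately show ?thesis
    by (simp add: unicycles_def)
qed

lemma unicycle_upd_root_tree:
  assumes "g \<in> unicycles y"
  shows "rooted_tree y (g(y := y))"
  using assms by (simp add: unicycles_def rooted_tree_def reaches_upd_root)

lemma rooted_tree_link_unicycle:
  assumes tree: "rooted_tree x f" and "x \<noteq> y"
  shows "f(x := y) \<in> unicycles y"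
proof -
  have x: "x \<in> reaches (f(x := y)) y"
    by (rule reaches.step) (simp add: reaches.root)
  have "v \<in> reaches (f(x := y)) y" for v
  proof -
    have "v \<in> reaches (f(x := y)) x"
      using tree by (simp add: rooted_tree_def reaches_upd_root)
    then show ?thesis using x by (rule reaches_trans)
  qed
  moreover have "(f(x := y)) v \<noteq> v" for v
    using rooted_tree_no_fixpoint[OF tree] \<open>x \<noteq> y\<close> by (cases "v = x") simp_all
  ultimately show ?thesis
    by (simp add: unicycles_def)
qed

lemma unicycle_cut_before_root:
  assumes g: "g \<in> unicycles y"
  shows "\<exists>x. x \<noteq> y \<and> g x = y \<and> rooted_tree x (g(x := x))"
proof -
  define h where "h = g(y := y)"
  define z where "z = g y"
  have "z \<noteq> y"
    using g by (simp add: unicycles_def z_def)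
  moreover have "z \<in> reaches h y"
    using unicycle_upd_root_tree[OF g] by (simp add: rooted_tree_def h_def)
  ultimately obtain x where x: "x \<noteq> y" "h x = y" "z \<in> reaches (h(x := x)) x"
    using reaches_via_child by metis
  define f where "f = g(x := x)"
  have f_eq: "f = h(x := x, y := z)" and f_y: "f(y := y) = h(x := x)"
    using x(1) by (auto simp: fun_eq_iff f_def h_def z_def)
  have "z \<notin> reaches f y"
  proof
    assume "z \<in> reaches f y"
    then have "z \<in> reaches (h(x := x)) y"
      using reaches_upd_root[of z f y y] f_y by simp
    moreover have "(h(x := x)) x = x" "(h(x := x)) y = y"
      using x(1) by (simp_all add: h_def)
    ultimately show False
      using reaches_unique_fixpoint[OF x(3)] x(1) by blast
  qed
  then have "z \<in> reaches f x"
    using reaches_fun_upd[OF x(3), of y z] f_eq by simp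
  then have "f y \<in> reaches f x"
    using x(1) by (simp add: f_def z_def)
  then have "y \<in> reaches f x"
    by (rule reaches.step)
  moreover have "u \<in> reaches f y \<or> u \<in> reaches f x" for u
    using g reaches_fun_upd[of u g y x x] by (simp add: unicycles_def f_def)
  ultimately have "u \<in> reaches f x" for u
    by (meson reaches_trans)
  moreover have "g x = y"
    using x(1,2) by (simp add: h_def)
  ultimately show ?thesis
    using x(1) by (auto simp: rooted_tree_def f_def)
qed

lemma rooted_tree_cut_sibling:
  assumes tree: "rooted_tree a (g(a := a))" and "g b = y" "b \<noteq> a"
  shows "y \<in> reaches (g(a := a, b := b)) a"
proof -
  define f where "f = g(a := a)"
  have "f b = y"
    using assms by (simp add: f_def)
  have "y \<in> reaches f a"
    using tree by (simp add: rooted_tree_def f_def)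
  then have "y \<in> reaches (f(b := b)) a \<or> y \<in> reaches (f(b := b)) b"
    by (rule reaches_fun_upd)
  moreover have "y \<notin> reaches (f(b := b)) b"
  proof
    assume "y \<in> reaches (f(b := b)) b"
    then have "y \<in> reaches (f(b := b, b := y)) b"
      by (rule reaches_upd_root)
    then have "y \<in> reaches f b"
      using \<open>f b = y\<close> by (simp add: fun_upd_idem)
    then show False
      using rooted_tree_acyclic[OF tree[folded f_def] \<open>f b = y\<close>] \<open>b \<noteq> a\<close> by simp
  qed
  ultimately show ?thesis
    by (simp add: f_def)
qed

lemma unicycle_cut_unique:
  assumes tree1: "rooted_tree x1 (g(x1 := x1))" and tree2: "rooted_tree x2 (g(x2 := x2))"
    and "g x1 = y" "g x2 = y"
  shows "x1 = x2"
proof (rule ccontr)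
  assume ne: "x1 \<noteq> x2"
  define k where "k = g(x1 := x1, x2 := x2)"
  have "y \<in> reaches k x1"
    using rooted_tree_cut_sibling[OF tree1 \<open>g x2 = y\<close>] ne by (simp add: k_def)
  moreover have "y \<in> reaches k x2"
    using rooted_tree_cut_sibling[OF tree2 \<open>g x1 = y\<close>] ne by (simp add: k_def fun_upd_twist)
  moreover have "k x1 = x1" "k x2 = x2"
    using ne by (simp_all add: k_def)
  ultimately show False
    using reaches_unique_fixpoint ne by metis
qed

lemma bij_betw_root_edge_unicycles:
  "bij_betw (\<lambda>(f, z). f(y := z)) ({f. rooted_tree y f} \<times> (UNIV - {y})) (unicycles y)"
proof (rule bij_betw_byWitness[where f' = "\<lambda>g. (g(y := y), g y)"])
  show "\<forall>p\<in>{f. rooted_tree y f} \<times> (UNIV - {y}). (\<lambda>g. (g(y := y), g y)) ((\<lambda>(f, z). f(y := z)) p) = p"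
    by (auto simp: rooted_tree_def)
  show "\<forall>g\<in>unicycles y. (\<lambda>(f, z). f(y := z)) (g(y := y), g y) = g"
    by simp
  show "(\<lambda>(f, z). f(y := z)) ` ({f. rooted_tree y f} \<times> (UNIV - {y})) \<subseteq> unicycles y"
    by (auto intro: rooted_tree_upd_root_unicycle)
  show "(\<lambda>g. (g(y := y), g y)) ` unicycles y \<subseteq> {f. rooted_tree y f} \<times> (UNIV - {y})"
    by (auto simp: unicycles_def intro: unicycle_upd_root_tree)
qed

lemma bij_betw_edge_into_root_unicycles:
  "bij_betw (\<lambda>(x, f). f(x := y)) (SIGMA x:UNIV - {y}. {f. rooted_tree x f}) (unicycles y)"
proof (rule bij_betw_imageI)
  show "inj_on (\<lambda>(x, f). f(x := y)) (SIGMA x:UNIV - {y}. {f. rooted_tree x f})"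
  proof (rule inj_onI)
    fix p1 p2
    assume "p1 \<in> (SIGMA x:UNIV - {y}. {f. rooted_tree x f})" "p2 \<in> (SIGMA x:UNIV - {y}. {f. rooted_tree x f})"
      and "(\<lambda>(x, f). f(x := y)) p1 = (\<lambda>(x, f). f(x := y)) p2"
    then obtain x1 f1 x2 f2 where p: "p1 = (x1, f1)" "p2 = (x2, f2)"
      and tree1: "rooted_tree x1 f1" and tree2: "rooted_tree x2 f2" and eq: "f1(x1 := y) = f2(x2 := y)"
      by auto
    define g where "g = f1(x1 := y)"
    have f1: "f1 = g(x1 := x1)" and f2: "f2 = g(x2 := x2)"
      using tree1 tree2 eq by (auto simp: rooted_tree_def g_def fun_eq_iff)
    have "g x1 = y" "g x2 = y"
      unfolding g_def by simp (simp add: eq)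
    then have "x1 = x2"
      using tree1 tree2 unicycle_cut_unique[of x1 g x2 y] by (simp add: f1 f2)
    then show "p1 = p2"
      using f1 f2 p by simp
  qed
  show "(\<lambda>(x, f). f(x := y)) ` (SIGMA x:UNIV - {y}. {f. rooted_tree x f}) = unicycles y"
  proof
    show "(\<lambda>(x, f). f(x := y)) ` (SIGMA x:UNIV - {y}. {f. rooted_tree x f}) \<subseteq> unicycles y"
      by (auto intro: rooted_tree_link_unicycle)
    show "unicycles y \<subseteq> (\<lambda>(x, f). f(x := y)) ` (SIGMA x:UNIV - {y}. {f. rooted_tree x f})"
    proof
      fix g assume "g \<in> unicycles y"
      then obtain x where x: "x \<noteq> y" "g x = y" "rooted_tree x (g(x := x))"
        using unicycle_cut_before_root by metis
      then have "g = (\<lambda>(x, f). f(x := y)) (x, g(x := x))"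
        by auto
      with x show "g \<in> (\<lambda>(x, f). f(x := y)) ` (SIGMA x:UNIV - {y}. {f. rooted_tree x f})"
        by blast
    qed
  qed
qed

section \<open>The Markov chain tree theorem\<close>

definition tree_weight :: "('a \<Rightarrow> 'a \<Rightarrow> 'b::comm_monoid_mult) \<Rightarrow> 'a::finite \<Rightarrow> ('a \<Rightarrow> 'a) \<Rightarrow> 'b" where
  "tree_weight Q r f = (\<Prod>v\<in>UNIV - {r}. Q v (f v))"

definition tree_sum :: "('a \<Rightarrow> 'a \<Rightarrow> 'b::comm_semiring_1) \<Rightarrow> 'a::finite \<Rightarrow> 'b" where
  "tree_sum Q r = (\<Sum>f | rooted_tree r f. tree_weight Q r f)"

lemma tree_weight_mult: "tree_weight Q r f * Q r z = (\<Prod>v\<in>UNIV. Q v ((f(r := z)) v))"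
proof -
  have "(\<Prod>v\<in>UNIV. Q v ((f(r := z)) v)) = Q r z * (\<Prod>v\<in>UNIV - {r}. Q v ((f(r := z)) v))"
    by (subst prod.remove[of _ r]) auto
  also have "(\<Prod>v\<in>UNIV - {r}. Q v ((f(r := z)) v)) = tree_weight Q r f"
    unfolding tree_weight_def by (rule prod.cong) auto
  finally show ?thesis
    by (simp add: mult.commute)
qed

lemma tree_sum_balance:
  fixes Q :: "'a::finite \<Rightarrow> 'a \<Rightarrow> 'b::comm_semiring_1"
  shows "(\<Sum>x\<in>UNIV - {y}. tree_sum Q x * Q x y) = tree_sum Q y * (\<Sum>z\<in>UNIV - {y}. Q y z)"
proof -
  let ?W = "\<lambda>g. \<Prod>v\<in>UNIV. Q v (g v)"
  have "tree_sum Q y * (\<Sum>z\<in>UNIV - {y}. Q y z)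
      = (\<Sum>(f, z)\<in>{f. rooted_tree y f} \<times> (UNIV - {y}). ?W (f(y := z)))"
    unfolding tree_sum_def sum_product sum.cartesian_product by (simp add: tree_weight_mult)
  also have "\<dots> = (\<Sum>g\<in>unicycles y. ?W g)"
    using sum.reindex_bij_betw[OF bij_betw_root_edge_unicycles, of ?W]
    by (simp add: case_prod_unfold)
  also have "\<dots> = (\<Sum>(x, f)\<in>(SIGMA x:UNIV - {y}. {f. rooted_tree x f}). ?W (f(x := y)))"
    using sum.reindex_bij_betw[OF bij_betw_edge_into_root_unicycles, of ?W]
    by (simp add: case_prod_unfold)
  also have "\<dots> = (\<Sum>x\<in>UNIV - {y}. tree_sum Q x * Q x y)"
    unfolding tree_sum_def sum_distrib_right
    by (subst sum.Sigma) (auto simp: tree_weight_mult)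
  finally show ?thesis ..
qed

lemma rooted_tree_along_edges:
  assumes connected: "\<forall>v. (v, r) \<in> E\<^sup>*"
  shows "\<exists>f. rooted_tree r f \<and> (\<forall>v. v \<noteq> r \<longrightarrow> (v, f v) \<in> E)"
proof -
  define d where "d v = (LEAST n. (v, r) \<in> E ^^ n)" for v
  have d: "(v, r) \<in> E ^^ d v" for v
    unfolding d_def using connected rtrancl_imp_relpow by (metis LeastI)
  have "\<exists>u. v \<noteq> r \<longrightarrow> (v, u) \<in> E \<and> d u < d v" for v
  proof (cases "d v")
    case 0
    then show ?thesis using d[of v] by auto
  next
    case (Suc n)
    then obtain u where "(v, u) \<in> E" "(u, r) \<in> E ^^ n"
      using d[of v] relpow_Suc_D2 by metis
    moreover have "d u \<le> n"
      unfolding d_def using \<open>(u, r) \<in> E ^^ n\<close> by (rule Least_le)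
    ultimately show ?thesis
      using Suc by auto
  qed
  then obtain g where g: "\<And>v. v \<noteq> r \<Longrightarrow> (v, g v) \<in> E \<and> d (g v) < d v"
    by metis
  define f where "f = g(r := r)"
  have "v \<in> reaches f r" for v
  proof (induction "d v" arbitrary: v rule: less_induct)
    case less
    show ?case
    proof (cases "v = r")
      case True
      then show ?thesis by (simp add: reaches.root)
    next
      case False
      then have "f v \<in> reaches f r"
        using less g by (simp add: f_def)
      then show ?thesis by (rule reaches.step)
    qed
  qed
  moreover have "f r = r" "\<forall>v. v \<noteq> r \<longrightarrow> (v, f v) \<in> E"
    using g by (simp_all add: f_def)
  ultimately show ?thesis
    unfolding rooted_tree_def by metis
qed

lemma tree_sum_pos:
  fixes Q :: "'a::finite \<Rightarrow> 'a \<Rightarrow> real"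
  assumes "jump_rates Q" and "irreducible_rates Q"
  shows "tree_sum Q r > 0"
proof -
  obtain f where f: "rooted_tree r f" "\<forall>v. v \<noteq> r \<longrightarrow> Q v (f v) > 0"
    using rooted_tree_along_edges[of r "{(u, v). u \<noteq> v \<and> Q u v > 0}"] assms(2)
    by (auto simp: irreducible_rates_def)
  have "tree_weight Q r f > 0"
    unfolding tree_weight_def using f by (intro prod_pos) auto
  moreover have "tree_weight Q r f' \<ge> 0" if "rooted_tree r f'" for f'
    unfolding tree_weight_def using assms(1) rooted_tree_no_fixpoint[OF that]
    by (intro prod_nonneg) (metis DiffE insertI1 jump_rates_def)
  ultimately show ?thesis
    unfolding tree_sum_def using f by (intro sum_pos2[of _ f]) auto
qed

lemma balanced_nonneg_vanishes:
  fixes Q :: "'a::finite \<Rightarrow> 'a \<Rightarrow> real"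
  assumes "jump_rates Q" and "irreducible_rates Q" and nonneg: "\<And>x. h x \<ge> 0"
    and balance: "\<And>y. (\<Sum>x\<in>UNIV - {y}. h x * Q x y) = h y * (\<Sum>z\<in>UNIV - {y}. Q y z)"
    and "h y0 = 0"
  shows "h x = 0"
proof -
  have backward: "h x = 0" if "h y = 0" "x \<noteq> y" "Q x y > 0" for x y
  proof -
    have "(\<Sum>x\<in>UNIV - {y}. h x * Q x y) = 0"
      using balance \<open>h y = 0\<close> by simp
    moreover have "\<forall>x\<in>UNIV - {y}. h x * Q x y \<ge> 0"
      using nonneg assms(1) by (auto simp: jump_rates_def)
    ultimately have "h x * Q x y = 0"
      using \<open>x \<noteq> y\<close> by (subst (asm) sum_nonneg_eq_0_iff) auto
    then show ?thesis
      using \<open>Q x y > 0\<close> by simp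
  qed
  have "(x, y0) \<in> {(u, v). u \<noteq> v \<and> Q u v > 0}\<^sup>*"
    using assms(2) by (simp add: irreducible_rates_def)
  then show ?thesis
    by (induction rule: converse_rtrancl_induct) (use \<open>h y0 = 0\<close> backward in auto)
qed

lemma invariant_prob_tree_sum:
  fixes Q :: "'a::finite \<Rightarrow> 'a \<Rightarrow> real"
  assumes rates: "jump_rates Q" and irred: "irreducible_rates Q" and inv: "invariant_prob Q \<mu>"
  shows "\<exists>t>0. \<forall>x. \<mu> x = t * tree_sum Q x"
proof -
  let ?w = "tree_sum Q"
  have w_pos: "?w x > 0" for x
    using tree_sum_pos[OF rates irred] .
  define t where "t = Min (range (\<lambda>x. \<mu> x / ?w x))"
  have "t \<in> range (\<lambda>x. \<mu> x / ?w x)"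
    unfolding t_def by (rule Min_in) simp_all
  then obtain y0 where y0: "t = \<mu> y0 / ?w y0"
    by blast
  \<comment> \<open>\<open>t\<close> is the largest constant with \<open>t \<cdot> tree_sum \<le> \<mu>\<close>, so \<open>\<mu> - t \<cdot> tree_sum\<close> is a
    nonnegative balanced function vanishing at \<open>y0\<close>.\<close>
  define h where "h x = \<mu> x - t * ?w x" for x
  have h_nonneg: "h x \<ge> 0" for x
    using w_pos by (auto simp: h_def t_def pos_le_divide_eq[symmetric])
  have h_y0: "h y0 = 0"
    using y0 w_pos[of y0] by (simp add: h_def)
  have h_balance: "(\<Sum>x\<in>UNIV - {y}. h x * Q x y) = h y * (\<Sum>z\<in>UNIV - {y}. Q y z)" for y
  proof -
    have "(\<Sum>x\<in>UNIV - {y}. h x * Q x y)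
        = (\<Sum>x\<in>UNIV - {y}. \<mu> x * Q x y) - t * (\<Sum>x\<in>UNIV - {y}. ?w x * Q x y)"
      by (simp add: h_def left_diff_distrib sum_subtractf sum_distrib_left mult.assoc)
    also have "\<dots> = h y * (\<Sum>z\<in>UNIV - {y}. Q y z)"
      using inv unfolding tree_sum_balance invariant_prob_def by (simp add: h_def algebra_simps)
    finally show ?thesis .
  qed
  have "h x = 0" for x
    using balanced_nonneg_vanishes[OF rates irred h_nonneg h_balance h_y0] .
  then have mu: "\<mu> x = t * ?w x" for x
    by (simp add: h_def)
  have "t \<noteq> 0"
    using inv mu by (auto simp: invariant_prob_def)
  moreover have "t \<ge> 0"
    using y0 w_pos[of y0] inv by (simp add: invariant_prob_def)
  ultimately have "t > 0"
    by simp
  with mu show ?thesis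
    by blast
qed

section \<open>Conductances as sums of monomials\<close>

definition supported_trees :: "('a \<times> 'a) set \<Rightarrow> 'a \<Rightarrow> ('a \<Rightarrow> 'a) set" where
  "supported_trees B r = {f. rooted_tree r f \<and> (\<forall>v. v \<noteq> r \<longrightarrow> (v, f v) \<in> B)}"

text \<open>Exponent vector of the monomial \<open>tree_weight Q x f * Q x \<xi>\<close>: one factor per tree edge
  and one for the jump \<open>(x, \<xi>)\<close>, so its degree is the number of states.\<close>

definition edge_exponent :: "'a \<Rightarrow> 'a \<Rightarrow> ('a \<Rightarrow> 'a) \<Rightarrow> 'a \<times> 'a \<Rightarrow> nat" where
  "edge_exponent x \<xi> f p = of_bool (fst p \<noteq> x \<and> f (fst p) = snd p) + of_bool (p = (x, \<xi>))"

lemma tree_sum_supported: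
  fixes Q :: "'a::finite \<Rightarrow> 'a \<Rightarrow> 'b::comm_semiring_1"
  assumes "\<And>x y. x \<noteq> y \<Longrightarrow> (x, y) \<notin> B \<Longrightarrow> Q x y = 0"
  shows "tree_sum Q r = (\<Sum>f\<in>supported_trees B r. tree_weight Q r f)"
  unfolding tree_sum_def
proof (rule sum.mono_neutral_right)
  show "\<forall>f\<in>{f. rooted_tree r f} - supported_trees B r. tree_weight Q r f = 0"
  proof
    fix f assume "f \<in> {f. rooted_tree r f} - supported_trees B r"
    then obtain v where "rooted_tree r f" "v \<noteq> r" "(v, f v) \<notin> B"
      by (auto simp: supported_trees_def)
    then have "Q v (f v) = 0"
      using assms rooted_tree_no_fixpoint by metis
    with \<open>v \<noteq> r\<close> show "tree_weight Q r f = 0"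
      unfolding tree_weight_def by (intro prod_zero) auto
  qed
qed (auto simp: supported_trees_def)

lemma supported_trees_nonempty:
  fixes Q :: "'a \<Rightarrow> 'a \<Rightarrow> real"
  assumes "irreducible_rates Q" and "\<And>x y. x \<noteq> y \<Longrightarrow> (x, y) \<notin> B \<Longrightarrow> Q x y = 0"
  shows "supported_trees B r \<noteq> {}"
proof -
  have "{(u, v). u \<noteq> v \<and> Q u v > 0} \<subseteq> B"
    using assms(2) by force
  then have "\<forall>v. (v, r) \<in> B\<^sup>*"
    using assms(1) rtrancl_mono unfolding irreducible_rates_def by blast
  then obtain f where "rooted_tree r f" "\<forall>v. v \<noteq> r \<longrightarrow> (v, f v) \<in> B"
    using rooted_tree_along_edges by metis
  then show ?thesis
    by (auto simp: supported_trees_def)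
qed

lemma supported_tree_edges:
  assumes "f \<in> supported_trees B x"
  shows "B \<inter> {p. fst p \<noteq> x \<and> f (fst p) = snd p} = (\<lambda>v. (v, f v)) ` (UNIV - {x})"
  using assms by (auto simp: supported_trees_def)

lemma edge_exponent_support:
  assumes "(x, \<xi>) \<in> B" and "f \<in> supported_trees B x" and "p \<notin> B"
  shows "edge_exponent x \<xi> f p = 0"
  using assms by (cases p) (auto simp: edge_exponent_def supported_trees_def)

lemma edge_exponent_degree:
  fixes B :: "('a::finite \<times> 'a) set"
  assumes "(x, \<xi>) \<in> B" and "f \<in> supported_trees B x"
  shows "sum (edge_exponent x \<xi> f) B = CARD('a)"
proof -
  have "sum (edge_exponent x \<xi> f) B = card (B \<inter> {p. fst p \<noteq> x \<and> f (fst p) = snd p}) + 1"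
  proof -
    have "B \<inter> {p. p = (x, \<xi>)} = {(x, \<xi>)}"
      using assms(1) by auto
    then show ?thesis
      by (simp add: edge_exponent_def sum.distrib)
  qed
  also have "card (B \<inter> {p. fst p \<noteq> x \<and> f (fst p) = snd p}) = CARD('a) - 1"
    unfolding supported_tree_edges[OF assms(2)]
    by (subst card_image) (auto simp: inj_on_def card_Diff_singleton)
  finally show ?thesis
    by simp
qed

lemma edge_exponent_monomial:
  fixes Q :: "'a::finite \<Rightarrow> 'a \<Rightarrow> 'b::comm_monoid_mult"
  assumes "(x, \<xi>) \<in> B" and "f \<in> supported_trees B x"
  shows "(\<Prod>p\<in>B. Q (fst p) (snd p) ^ edge_exponent x \<xi> f p) = tree_weight Q x f * Q x \<xi>"
proof -
  let ?T = "{p. fst p \<noteq> x \<and> f (fst p) = snd p}" and ?Q = "\<lambda>p. Q (fst p) (snd p)"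
  have "(\<Prod>p\<in>B. ?Q p ^ edge_exponent x \<xi> f p)
      = (\<Prod>p\<in>B. if p \<in> ?T then ?Q p else 1) * (\<Prod>p\<in>B. if p \<in> {(x, \<xi>)} then ?Q p else 1)"
    unfolding edge_exponent_def power_add prod.distrib
    by (intro arg_cong2[where f = "(*)"] prod.cong refl) (simp_all add: of_bool_def)
  also have "\<dots> = (\<Prod>p\<in>B \<inter> ?T. ?Q p) * (\<Prod>p\<in>B \<inter> {(x, \<xi>)}. ?Q p)"
    by (simp only: prod.inter_restrict finite)
  also have "B \<inter> {(x, \<xi>)} = {(x, \<xi>)}"
    using assms(1) by auto
  also have "(\<Prod>p\<in>B \<inter> ?T. ?Q p) = tree_weight Q x f"
    unfolding supported_tree_edges[OF assms(2)] tree_weight_def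
    by (subst prod.reindex) (auto simp: inj_on_def)
  finally show ?thesis
    by simp
qed

lemma conductance_monomial_expansion:
  fixes Q :: "'a::finite \<Rightarrow> 'a \<Rightarrow> real"
  assumes rates: "jump_rates Q" and irred: "irreducible_rates Q" and inv: "invariant_prob Q \<mu>"
    and zero: "\<And>x y. x \<noteq> y \<Longrightarrow> (x, y) \<notin> B \<Longrightarrow> Q x y = 0"
  shows "\<exists>t>0. \<forall>x \<xi>. (x, \<xi>) \<in> B \<longrightarrow> \<mu> x * Q x \<xi> =
    t * (\<Sum>f\<in>supported_trees B x. \<Prod>p\<in>B. Q (fst p) (snd p) ^ edge_exponent x \<xi> f p)"
proof -
  obtain t where "t > 0" and mu: "\<And>x. \<mu> x = t * tree_sum Q x"
    using invariant_prob_tree_sum[OF rates irred inv] by blast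
  have "\<mu> x * Q x \<xi> =
      t * (\<Sum>f\<in>supported_trees B x. \<Prod>p\<in>B. Q (fst p) (snd p) ^ edge_exponent x \<xi> f p)"
    if "(x, \<xi>) \<in> B" for x \<xi>
  proof -
    have "\<mu> x * Q x \<xi> = t * (\<Sum>f\<in>supported_trees B x. tree_weight Q x f * Q x \<xi>)"
      by (simp add: mu tree_sum_supported[OF zero] sum_distrib_right)
    also have "\<dots> = t * (\<Sum>f\<in>supported_trees B x. \<Prod>p\<in>B. Q (fst p) (snd p) ^ edge_exponent x \<xi> f p)"
      using that by (simp add: edge_exponent_monomial)
    finally show ?thesis .
  qed
  with \<open>t > 0\<close> show ?thesis
    by blast
qed

lemma assumption_A_vanishes_off_jump_set:
  assumes "assumption_A R" and "N \<ge> 1" "x \<noteq> y" "(x, y) \<notin> jump_set R"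
  shows "R N x y = 0"
proof -
  have "\<not> (\<forall>N\<ge>1. R N x y > 0)"
    using assms(3,4) by (simp add: jump_set_def)
  then show ?thesis
    using assms(1-3) unfolding assumption_A_def by blast
qed

theorem lemma3p4:
  fixes R :: "nat \<Rightarrow> 'a::finite \<Rightarrow> 'a \<Rightarrow> real"
    and \<mu> :: "nat \<Rightarrow> 'a \<Rightarrow> real"
  assumes rates: "\<And>N. N \<ge> 1 \<Longrightarrow> jump_rates (R N)"
    and irred: "\<And>N. N \<ge> 1 \<Longrightarrow> irreducible_rates (R N)"
    and inv: "\<And>N. N \<ge> 1 \<Longrightarrow> invariant_prob (R N) (\<mu> N)"
    and A: "assumption_A R"
  shows "ordered_family (jump_set R) (\<lambda>p N. \<mu> N (fst p) * R N (fst p) (snd p))"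
proof -
  let ?B = "jump_set R"
  let ?K = "{k. (\<forall>p. p \<notin> ?B \<longrightarrow> k p = 0) \<and> sum k ?B = CARD('a)}"
  let ?monomial = "\<lambda>k N. \<Prod>p\<in>?B. R N (fst p) (snd p) ^ k p"
  note zero = assumption_A_vanishes_off_jump_set[OF A]
  show ?thesis
  proof (rule ordered_family_scaled_sums[where S = "\<lambda>p. supported_trees ?B (fst p)"
        and \<phi> = "\<lambda>p. edge_exponent (fst p) (snd p)"])
    show "ordered_family ?K ?monomial"
      using A unfolding assumption_A_def by (simp add: Suc_leI)
    fix p assume "p \<in> ?B"
    then show "finite (supported_trees ?B (fst p)) \<and> supported_trees ?B (fst p) \<noteq> {} \<and>
        edge_exponent (fst p) (snd p) ` supported_trees ?B (fst p) \<subseteq> ?K"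
      using supported_trees_nonempty[OF irred zero, of 1]
      by (cases p) (auto simp: edge_exponent_degree edge_exponent_support)
  next
    fix N :: nat assume "N \<ge> 1"
    then show "\<exists>t>0. \<forall>p\<in>?B. \<mu> N (fst p) * R N (fst p) (snd p) =
        t * (\<Sum>f\<in>supported_trees ?B (fst p). ?monomial (edge_exponent (fst p) (snd p) f) N)"
      using conductance_monomial_expansion[OF rates irred inv zero] by fastforce
  qed simp
qed

end
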